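(* Let $\Theta$ be a finite set, $b$ a belief function on $\Theta$ with mass function $m_b$, and $\emptyset \subsetneq A \subseteq \Theta$. There is a unique $L_2$ conditional belief function $b_{L_2,\mathcal{M}}(\cdot|A)$ of $b$ with respect to $A$ in the mass space (minimizer of $\|\vec{m}_b - \vec{m}_a\|_{L_2}$ over $\vec{m}_a\in\mathcal{M}_A$), and its mass function is, for all $\emptyset \subsetneq B \subseteq A$, \[ m_{L_2,\mathcal{M}}(B|A) = m_b(B) + \frac{1}{2^{|A|}-1} \sum_{C \not\subseteq A} m_b(C) = m_b(B) + \frac{pl_b(A^c)}{2^{|A|}-1}, \] (and it assigns zero mass to subsets not contained in $A$), where the sum runs over nonempty $C\subseteq\Theta$ not contained in $A$.
   Context: A mass function on a finite set $\Theta$ is $m:2^\Theta\to[0,1]$ with $m(\emptyset)=0$ and $\sum_{A\subseteq\Theta} m(A)=1$; the associated belief function is $b(A)=\sum_{B\subseteq A} m_b(B)$ and plausibility $pl_b(A)=1-b(A^c)$. The mass vector of $b$ is $\vec{m}_b=[m_b(B)]_{\emptyset\subsetneq B\subseteq\Theta}\in\mathbb{R}^{2^{|\Theta|}-1}$. For $\emptyset\subsetneq A\subseteq\Theta$, $\mathcal{M}_A$ is the set of mass vectors of belief functions all of whose focal elements (subsets of nonzero mass) are subsets of $A$. The $L_2$ distance is $\|\vec{m}_b-\vec{m}_{b'}\|_{L_2}=\sqrt{\sum_{\emptyset\subsetneq B\subseteq\Theta}(m_b(B)-m_{b'}(B))^2}$. *)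

theory Defs
  imports Complex_Main
begin

definition is_mass :: "'a set \<Rightarrow> ('a set \<Rightarrow> real) \<Rightarrow> bool" where
  "is_mass Theta m \<longleftrightarrow>
     m {} = 0 \<and> (\<forall>B. 0 \<le> m B) \<and> (\<forall>B. \<not> B \<subseteq> Theta \<longrightarrow> m B = 0)
     \<and> (\<Sum>B\<in>Pow Theta. m B) = 1"

definition bel :: "('a set \<Rightarrow> real) \<Rightarrow> 'a set \<Rightarrow> real" where
  "bel m A = (\<Sum>B\<in>Pow A. m B)"

definition pl :: "'a set \<Rightarrow> ('a set \<Rightarrow> real) \<Rightarrow> 'a set \<Rightarrow> real" where
  "pl Theta m A = 1 - bel m (Theta - A)"

definition mass_space_M :: "'a set \<Rightarrow> 'a set \<Rightarrow> ('a set \<Rightarrow> real) set" where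
  "mass_space_M Theta A = {m. is_mass Theta m \<and> (\<forall>B. m B \<noteq> 0 \<longrightarrow> B \<subseteq> A)}"

definition L2_mass_dist :: "'a set \<Rightarrow> ('a set \<Rightarrow> real) \<Rightarrow> ('a set \<Rightarrow> real) \<Rightarrow> real" where
  "L2_mass_dist Theta m m' = sqrt (\<Sum>B\<in>{B. B \<subseteq> Theta \<and> B \<noteq> {}}. (m B - m' B)^2)"

definition is_L2_conditional ::
  "'a set \<Rightarrow> ('a set \<Rightarrow> real) \<Rightarrow> 'a set \<Rightarrow> ('a set \<Rightarrow> real) \<Rightarrow> bool" where
  "is_L2_conditional Theta m A ma \<longleftrightarrow>
     ma \<in> mass_space_M Theta A \<and>
     (\<forall>m'\<in>mass_space_M Theta A. L2_mass_dist Theta m ma \<le> L2_mass_dist Theta m m')"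

end

theory Submission
  imports Defs
begin

text \<open>Inside the coordinates of the nonempty subsets of A, M_A is cut out by
  the affine hyperplane of total mass 1 (and nonnegativity); all other coordinates
  vanish. The orthogonal projection of m onto that hyperplane adds the same amount,
  the mass pl(A^c) lying outside A, to each of the 2^|A| - 1 coordinates. Since this
  amount is nonnegative, the projection is itself in M_A, and Pythagoras' theorem
  shows it is the unique closest point.\<close>

lemma sum_sq_diff_uniform_shift:
  fixes f g h :: "'b \<Rightarrow> real"
  assumes shift: "\<And>B. B \<in> Q \<Longrightarrow> g B = f B + c" and same_sum: "sum h Q = sum g Q"
  shows "(\<Sum>B\<in>Q. (f B - h B)^2) = (\<Sum>B\<in>Q. (f B - g B)^2) + (\<Sum>B\<in>Q. (h B - g B)^2)"
proof -
  have "(\<Sum>B\<in>Q. (f B - h B)^2)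
      = (\<Sum>B\<in>Q. (f B - g B)^2 + (h B - g B)^2 + 2 * c * (h B - g B))"
    by (intro sum.cong) (auto simp: shift power2_eq_square algebra_simps)
  also have "\<dots> = (\<Sum>B\<in>Q. (f B - g B)^2) + (\<Sum>B\<in>Q. (h B - g B)^2) + 2 * c * (sum h Q - sum g Q)"
    by (simp add: sum.distrib sum_subtractf flip: sum_distrib_left)
  finally show ?thesis
    using same_sum by simp
qed

lemma card_Pow_diff_empty:
  assumes "finite A"
  shows "real (card (Pow A - {{}})) = 2 ^ card A - 1"
  using assms by (simp add: card_Pow card_Diff_singleton of_nat_diff)

lemma bel_add_sum_not_subset:
  assumes "finite Theta" and "is_mass Theta m" and "A \<subseteq> Theta"
  shows "bel m A + (\<Sum>C\<in>{C. C \<subseteq> Theta \<and> C \<noteq> {} \<and> \<not> C \<subseteq> A}. m C) = 1"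
proof -
  have "Pow Theta = Pow A \<union> {C. C \<subseteq> Theta \<and> C \<noteq> {} \<and> \<not> C \<subseteq> A}"
    using assms(3) by auto
  moreover have "finite (Pow Theta)"
    using assms(1) by simp
  ultimately have "(\<Sum>B\<in>Pow Theta. m B)
      = bel m A + (\<Sum>C\<in>{C. C \<subseteq> Theta \<and> C \<noteq> {} \<and> \<not> C \<subseteq> A}. m C)"
    unfolding bel_def by (metis (no_types, lifting) sum.union_disjoint finite_Un disjoint_iff
        PowD mem_Collect_eq)
  then show ?thesis
    using assms(2) by (simp add: is_mass_def)
qed

lemma pl_compl_eq_sum_not_subset:
  assumes "finite Theta" and "is_mass Theta m" and "A \<subseteq> Theta"
  shows "pl Theta m (Theta - A) = (\<Sum>C\<in>{C. C \<subseteq> Theta \<and> C \<noteq> {} \<and> \<not> C \<subseteq> A}. m C)"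
proof -
  have "Theta - (Theta - A) = A"
    using assms(3) by auto
  then show ?thesis
    using bel_add_sum_not_subset[OF assms] by (simp add: pl_def)
qed

lemma sum_Pow_diff_empty_mass:
  assumes "finite A" and "m {} = 0"
  shows "(\<Sum>B\<in>Pow A - {{}}. m B) = bel m A"
  using assms by (simp add: bel_def sum_diff1)

lemma mass_space_M_vanishes:
  assumes "m' \<in> mass_space_M Theta A" and "\<not> (B \<noteq> {} \<and> B \<subseteq> A)"
  shows "m' B = 0"
  using assms by (auto simp: mass_space_M_def is_mass_def)

lemma mass_space_M_sum:
  assumes "finite Theta" and "A \<subseteq> Theta" and M: "m' \<in> mass_space_M Theta A"
  shows "(\<Sum>B\<in>Pow A - {{}}. m' B) = 1"
proof -
  have mass: "is_mass Theta m'"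
    using M by (simp add: mass_space_M_def)
  have "(\<Sum>C\<in>{C. C \<subseteq> Theta \<and> C \<noteq> {} \<and> \<not> C \<subseteq> A}. m' C) = 0"
    using mass_space_M_vanishes[OF M] by simp
  then have "bel m' A = 1"
    using bel_add_sum_not_subset[OF assms(1) mass assms(2)] by simp
  moreover have "finite A"
    using assms(1,2) finite_subset by blast
  ultimately show ?thesis
    using mass by (simp add: sum_Pow_diff_empty_mass is_mass_def)
qed

lemma L2_mass_dist_sq_split:
  assumes "finite Theta" and "A \<subseteq> Theta"
    and vanishes: "\<And>B. \<not> (B \<noteq> {} \<and> B \<subseteq> A) \<Longrightarrow> m' B = 0"
  shows "(L2_mass_dist Theta m m')^2
      = (\<Sum>B\<in>Pow A - {{}}. (m B - m' B)^2)
        + (\<Sum>B\<in>{B. B \<subseteq> Theta \<and> B \<noteq> {} \<and> \<not> B \<subseteq> A}. (m B)^2)"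
proof -
  let ?P = "{B. B \<subseteq> Theta \<and> B \<noteq> {}}"
  have "finite ?P"
    using assms(1) by (simp add: finite_subset[of _ "Pow Theta"])
  moreover have "Pow A - {{}} \<subseteq> ?P"
    using assms(2) by auto
  moreover have "?P - (Pow A - {{}}) = {B. B \<subseteq> Theta \<and> B \<noteq> {} \<and> \<not> B \<subseteq> A}"
    by auto
  ultimately have "(\<Sum>B\<in>?P. (m B - m' B)^2)
      = (\<Sum>B\<in>Pow A - {{}}. (m B - m' B)^2)
        + (\<Sum>B\<in>{B. B \<subseteq> Theta \<and> B \<noteq> {} \<and> \<not> B \<subseteq> A}. (m B - m' B)^2)"
    by (metis (no_types, lifting) add.commute sum.subset_diff)
  also have "(\<Sum>B\<in>{B. B \<subseteq> Theta \<and> B \<noteq> {} \<and> \<not> B \<subseteq> A}. (m B - m' B)^2)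
      = (\<Sum>B\<in>{B. B \<subseteq> Theta \<and> B \<noteq> {} \<and> \<not> B \<subseteq> A}. (m B)^2)"
    using vanishes by simp
  finally show ?thesis
    by (simp add: L2_mass_dist_def sum_nonneg)
qed

definition L2_conditional_mass :: "'a set \<Rightarrow> ('a set \<Rightarrow> real) \<Rightarrow> 'a set \<Rightarrow> 'a set \<Rightarrow> real" where
  "L2_conditional_mass Theta m A B =
     (if B \<noteq> {} \<and> B \<subseteq> A
      then m B + (\<Sum>C\<in>{C. C \<subseteq> Theta \<and> C \<noteq> {} \<and> \<not> C \<subseteq> A}. m C) / (2 ^ card A - 1)
      else 0)"

context
  fixes Theta A :: "'a set" and m :: "'a set \<Rightarrow> real"
  assumes fin: "finite Theta" and mass: "is_mass Theta m"
    and nonempty: "A \<noteq> {}" and sub: "A \<subseteq> Theta"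
begin

lemma L2_conditional_mass_in_mass_space_M:
  "L2_conditional_mass Theta m A \<in> mass_space_M Theta A"
proof -
  let ?k = "\<Sum>C\<in>{C. C \<subseteq> Theta \<and> C \<noteq> {} \<and> \<not> C \<subseteq> A}. m C"
  let ?N = "2 ^ card A - 1 :: real"
  let ?ms = "L2_conditional_mass Theta m A"
  have finA: "finite A"
    using fin sub finite_subset by blast
  have "card A \<ge> 1"
    using finA nonempty by (simp add: Suc_le_eq card_gt_0_iff)
  then have "(2::real) ^ card A \<ge> 2 ^ 1"
    by (intro power_increasing) auto
  then have N_pos: "?N > 0"
    by simp
  have m_nonneg: "\<And>B. 0 \<le> m B" and m_empty: "m {} = 0"
    using mass by (auto simp: is_mass_def)
  have "?k \<ge> 0"
    by (intro sum_nonneg) (use m_nonneg in auto)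
  then have ms_nonneg: "\<forall>B. 0 \<le> ?ms B"
    using m_nonneg N_pos by (simp add: L2_conditional_mass_def)
  have "(\<Sum>B\<in>Pow A - {{}}. ?ms B) = (\<Sum>B\<in>Pow A - {{}}. m B + ?k / ?N)"
    by (intro sum.cong) (auto simp: L2_conditional_mass_def)
  also have "\<dots> = bel m A + real (card (Pow A - {{}})) * (?k / ?N)"
    by (simp only: sum.distrib sum_constant sum_Pow_diff_empty_mass[where m = m, OF finA m_empty])
  also have "\<dots> = bel m A + ?k"
    using N_pos by (simp only: card_Pow_diff_empty[OF finA]) simp
  also have "\<dots> = 1"
    using bel_add_sum_not_subset[OF fin mass sub] .
  finally have "(\<Sum>B\<in>Pow Theta. ?ms B) = 1"
    using fin sub by (subst sum.mono_neutral_right[of "Pow Theta" "Pow A - {{}}"])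
      (auto simp: L2_conditional_mass_def)
  with ms_nonneg sub show ?thesis
    by (auto simp: mass_space_M_def is_mass_def L2_conditional_mass_def)
qed

lemma L2_mass_dist_sq_pythagoras:
  assumes M: "m' \<in> mass_space_M Theta A"
  shows "(L2_mass_dist Theta m m')^2
      = (L2_mass_dist Theta m (L2_conditional_mass Theta m A))^2
        + (\<Sum>B\<in>Pow A - {{}}. (m' B - L2_conditional_mass Theta m A B)^2)"
proof -
  let ?ms = "L2_conditional_mass Theta m A"
  have ms_M: "?ms \<in> mass_space_M Theta A"
    by (rule L2_conditional_mass_in_mass_space_M)
  have "(\<Sum>B\<in>Pow A - {{}}. (m B - m' B)^2)
      = (\<Sum>B\<in>Pow A - {{}}. (m B - ?ms B)^2) + (\<Sum>B\<in>Pow A - {{}}. (m' B - ?ms B)^2)"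
    using mass_space_M_sum[OF fin sub M] mass_space_M_sum[OF fin sub ms_M]
    by (intro sum_sq_diff_uniform_shift) (auto simp: L2_conditional_mass_def)
  then show ?thesis
    using L2_mass_dist_sq_split[OF fin sub] mass_space_M_vanishes[OF M]
      mass_space_M_vanishes[OF ms_M]
    by simp
qed

lemma is_L2_conditional_iff:
  "is_L2_conditional Theta m A ma \<longleftrightarrow> ma = L2_conditional_mass Theta m A"
proof
  let ?ms = "L2_conditional_mass Theta m A"
  have ms_M: "?ms \<in> mass_space_M Theta A"
    by (rule L2_conditional_mass_in_mass_space_M)
  assume opt: "is_L2_conditional Theta m A ma"
  then have M: "ma \<in> mass_space_M Theta A"
    by (simp add: is_L2_conditional_def)
  have "L2_mass_dist Theta m ma \<le> L2_mass_dist Theta m ?ms"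
    using opt ms_M by (simp add: is_L2_conditional_def)
  then have "(L2_mass_dist Theta m ma)^2 \<le> (L2_mass_dist Theta m ?ms)^2"
    by (simp add: L2_mass_dist_def sum_nonneg)
  then have "(\<Sum>B\<in>Pow A - {{}}. (ma B - ?ms B)^2) \<le> 0"
    using L2_mass_dist_sq_pythagoras[OF M] by simp
  moreover have "finite (Pow A - {{}})"
    using fin sub finite_subset by blast
  ultimately have "\<forall>B\<in>Pow A - {{}}. ma B = ?ms B"
    using sum_nonneg_eq_0_iff[of "Pow A - {{}}" "\<lambda>B. (ma B - ?ms B)^2"]
    by (simp add: order_antisym sum_nonneg)
  moreover have "ma B = ?ms B" if "B \<notin> Pow A - {{}}" for B
  proof -
    have "\<not> (B \<noteq> {} \<and> B \<subseteq> A)"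
      using that by auto
    then show ?thesis
      using mass_space_M_vanishes[OF M] mass_space_M_vanishes[OF ms_M] by metis
  qed
  ultimately show "ma = ?ms"
    by (metis ext)
next
  assume ma: "ma = L2_conditional_mass Theta m A"
  have "L2_mass_dist Theta m ma \<le> L2_mass_dist Theta m m'"
    if "m' \<in> mass_space_M Theta A" for m'
    using L2_mass_dist_sq_pythagoras[OF that] unfolding ma
    by (simp add: L2_mass_dist_def sum_nonneg)
  then show "is_L2_conditional Theta m A ma"
    using L2_conditional_mass_in_mass_space_M ma by (simp add: is_L2_conditional_def)
qed

end

theorem theorem3:
  fixes Theta A :: "'a set" and m :: "'a set \<Rightarrow> real"
  assumes "finite Theta" and "is_mass Theta m"
    and "A \<noteq> {}" and "A \<subseteq> Theta"
  shows "(\<exists>!ma. is_L2_conditional Theta m A ma) \<and>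
         (\<forall>ma. is_L2_conditional Theta m A ma \<longrightarrow>
            (\<forall>B. B \<noteq> {} \<and> B \<subseteq> A \<longrightarrow>
               ma B = m B + (\<Sum>C\<in>{C. C \<subseteq> Theta \<and> C \<noteq> {} \<and> \<not> C \<subseteq> A}. m C)
                              / (2 ^ card A - 1)
             \<and> ma B = m B + pl Theta m (Theta - A) / (2 ^ card A - 1))
            \<and> (\<forall>B. \<not> B \<subseteq> A \<longrightarrow> ma B = 0))"
  using is_L2_conditional_iff[OF assms] pl_compl_eq_sum_not_subset[OF assms(1,2,4)]
  by (auto simp: L2_conditional_mass_def)

end
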